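(* Let $h,n\geq 2$ with $h\leq n!$. Then every subgroup of $S_h\times\{id\}$ is an anonymity group with respect to $(h,n)$.
   Context: Permutations compose as $(\sigma\tau)(x)=\sigma(\tau(x))$. Let $G=S_h\times S_n$ and $\mathcal{P}=(S_n)^h$ (preference profiles), with $G$ acting by $(p^{(\varphi,\psi)})_i=\psi\,p_{\varphi^{-1}(i)}$. A social preference function (SPF) is any $F:\mathcal{P}\to S_n$; its symmetry group is $G(F)=\{(\varphi,\psi)\in G: F(p^{(\varphi,\psi)})=\psi F(p)\ \forall p\}$ and its anonymity group is $G_1(F)=G(F)\cap(S_h\times\{id\})$. A subgroup $U\leq S_h\times\{id\}$ is an anonymity group with respect to $(h,n)$ if $U=G_1(F)$ for some SPF $F$. *)

theory Defs
  imports "HOL-Algebra.Sym_Groups"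
begin

text \<open>Agents are 1..h, alternatives are 1..n. A permutation of {1..k} is an element
of carrier (sym_group k) (a function nat => nat permuting {1..k}); composition is (\<circ>),
i.e. (sigma tau)(x) = sigma (tau x).\<close>

definition profiles :: "nat \<Rightarrow> nat \<Rightarrow> (nat \<Rightarrow> (nat \<Rightarrow> nat)) set" where
  "profiles h n = ({1..h} \<rightarrow>\<^sub>E carrier (sym_group n))"

definition prof_act :: "nat \<Rightarrow> (nat \<Rightarrow> nat) \<Rightarrow> (nat \<Rightarrow> nat) \<Rightarrow> (nat \<Rightarrow> (nat \<Rightarrow> nat)) \<Rightarrow> (nat \<Rightarrow> (nat \<Rightarrow> nat))" where
  "prof_act h \<phi> \<psi> p = (\<lambda>i\<in>{1..h}. \<psi> \<circ> p (inv_into {1..h} \<phi> i))"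

text \<open>Social preference functions P -> S_n (only values on profiles matter).\<close>
definition SPF :: "nat \<Rightarrow> nat \<Rightarrow> ((nat \<Rightarrow> (nat \<Rightarrow> nat)) \<Rightarrow> (nat \<Rightarrow> nat)) set" where
  "SPF h n = (profiles h n \<rightarrow> carrier (sym_group n))"

definition symmetry_group :: "nat \<Rightarrow> nat \<Rightarrow> ((nat \<Rightarrow> (nat \<Rightarrow> nat)) \<Rightarrow> (nat \<Rightarrow> nat)) \<Rightarrow> ((nat \<Rightarrow> nat) \<times> (nat \<Rightarrow> nat)) set" where
  "symmetry_group h n F = {(\<phi>, \<psi>). \<phi> \<in> carrier (sym_group h) \<and> \<psi> \<in> carrier (sym_group n) \<and>
      (\<forall>p\<in>profiles h n. F (prof_act h \<phi> \<psi> p) = \<psi> \<circ> F p)}"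

definition anonymity_group :: "nat \<Rightarrow> nat \<Rightarrow> ((nat \<Rightarrow> (nat \<Rightarrow> nat)) \<Rightarrow> (nat \<Rightarrow> nat)) \<Rightarrow> (nat \<Rightarrow> nat) set" where
  "anonymity_group h n F = {\<phi>. (\<phi>, id) \<in> symmetry_group h n F}"

definition is_anonymity_group :: "nat \<Rightarrow> nat \<Rightarrow> (nat \<Rightarrow> nat) set \<Rightarrow> bool" where
  "is_anonymity_group h n U \<longleftrightarrow> (\<exists>F\<in>SPF h n. anonymity_group h n F = U)"

end

theory Submission
  imports Defs
begin

text \<open>As \<open>h \<le> n!\<close>, some profile \<open>p\<close> assigns pairwise distinct preferences to the
agents, so permuting the agents of \<open>p\<close> is a free action of \<open>S\<^sub>h\<close>. Let \<open>F\<close> be the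
identity on the \<open>U\<close>-orbit of \<open>p\<close> and a transposition elsewhere. Then \<open>G\<^sub>1(F)\<close> is the
setwise stabilizer of that orbit: it contains \<open>U\<close>, and any \<open>\<phi>\<close> in it sends \<open>p\<close> to some
\<open>u\<cdot>p\<close> with \<open>u \<in> U\<close>, whence \<open>\<phi> = u\<close> by freeness.\<close>

lemma inv_into_permutes:
  assumes "\<phi> permutes S" "i \<in> S"
  shows "inv_into S \<phi> i = inv' \<phi> i"
  by (metis assms inv_into_f_eq permutes_imp_bij permutes_inverses(1) bij_betw_inv_into_left
      permutes_inv permutes_in_image)

lemma prof_act_permutes:
  assumes "\<phi> permutes {1..h}"
  shows "prof_act h \<phi> \<psi> p = (\<lambda>i\<in>{1..h}. \<psi> \<circ> p (inv' \<phi> i))"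
  using assms by (auto simp: prof_act_def inv_into_permutes)

lemma prof_act_id:
  assumes "p \<in> profiles h n"
  shows "prof_act h id id p = p"
  using assms by (auto simp: prof_act_permutes permutes_id profiles_def PiE_def extensional_def)

lemma prof_act_comp:
  assumes "\<phi> permutes {1..h}" "\<phi>' permutes {1..h}"
  shows "prof_act h \<phi> \<psi> (prof_act h \<phi>' \<psi>' p) = prof_act h (\<phi> \<circ> \<phi>') (\<psi> \<circ> \<psi>') p"
proof -
  have "inv' (\<phi> \<circ> \<phi>') = inv' \<phi>' \<circ> inv' \<phi>"
    using assms by (simp add: o_inv_distrib permutes_bij)
  moreover have "inv' \<phi> i \<in> {1..h}" if "i \<in> {1..h}" for i
    using that permutes_inv[OF assms(1)] by (simp only: permutes_in_image)
  ultimately show ?thesis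
    using assms
    by (auto simp: prof_act_permutes permutes_compose simp del: atLeastAtMost_iff
        intro!: restrict_ext)
qed

lemma inj_on_prof_act_anon:
  assumes "inj_on p {1..h}"
  shows "inj_on (\<lambda>\<phi>. prof_act h \<phi> id p) {\<phi>. \<phi> permutes {1..h}}"
proof
  fix \<phi> \<phi>'
  assume \<phi>: "\<phi> \<in> {\<phi>. \<phi> permutes {1..h}}" and \<phi>': "\<phi>' \<in> {\<phi>. \<phi> permutes {1..h}}"
    and eq: "prof_act h \<phi> id p = prof_act h \<phi>' id p"
  have "inv' \<phi> i = inv' \<phi>' i" for i
  proof (cases "i \<in> {1..h}")
    case True
    have "inv' \<phi> i \<in> {1..h}" "inv' \<phi>' i \<in> {1..h}"
      using True permutes_inv[of \<phi>] permutes_inv[of \<phi>'] \<phi> \<phi>'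
      by (simp_all only: mem_Collect_eq permutes_in_image)
    moreover have "p (inv' \<phi> i) = p (inv' \<phi>' i)"
      using fun_cong[OF eq, of i] True \<phi> \<phi>' by (simp add: prof_act_permutes)
    ultimately show ?thesis
      using assms by (simp add: inj_on_eq_iff)
  next
    case False
    then show ?thesis
      using \<phi> \<phi>' permutes_not_in[OF permutes_inv[of _ "{1..h}"]] by simp
  qed
  then have "inv' \<phi> = inv' \<phi>'" ..
  then show "\<phi> = \<phi>'"
    using \<phi> \<phi>' by (metis mem_Collect_eq permutes_inv_inv)
qed

lemma sym_group_subgroupD:
  assumes "subgroup U (sym_group h)"
  shows "\<And>u. u \<in> U \<Longrightarrow> u permutes {1..h}"
    and "id \<in> U"
    and "\<And>u v. u \<in> U \<Longrightarrow> v \<in> U \<Longrightarrow> u \<circ> v \<in> U"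
    and "\<And>u. u \<in> U \<Longrightarrow> inv' u \<in> U"
proof -
  have carrier: "U \<subseteq> carrier (sym_group h)"
    using subgroup.subset[OF assms] .
  show "\<And>u. u \<in> U \<Longrightarrow> u permutes {1..h}"
    using carrier by (auto simp: sym_group_carrier)
  show "id \<in> U"
    using subgroup.one_closed[OF assms] by (simp add: sym_group_one)
  show "\<And>u v. u \<in> U \<Longrightarrow> v \<in> U \<Longrightarrow> u \<circ> v \<in> U"
    using subgroup.m_closed[OF assms] by (simp add: sym_group_mult)
  show "inv' u \<in> U" if "u \<in> U" for u
    using subgroup.m_inv_closed[OF assms that] sym_group_inv_equality[of u h] carrier that by auto
qed

definition anon_orbit ::
  "nat \<Rightarrow> (nat \<Rightarrow> nat) set \<Rightarrow> (nat \<Rightarrow> nat \<Rightarrow> nat) \<Rightarrow> (nat \<Rightarrow> nat \<Rightarrow> nat) set" where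
  "anon_orbit h U p = (\<lambda>u. prof_act h u id p) ` U"

definition anon_stabilizer ::
  "nat \<Rightarrow> nat \<Rightarrow> (nat \<Rightarrow> nat \<Rightarrow> nat) set \<Rightarrow> (nat \<Rightarrow> nat) set" where
  "anon_stabilizer h n A =
    {\<phi> \<in> carrier (sym_group h). \<forall>p\<in>profiles h n. prof_act h \<phi> id p \<in> A \<longleftrightarrow> p \<in> A}"

lemma anonymity_group_indicator:
  assumes "\<sigma> \<in> carrier (sym_group n)" "\<sigma> \<noteq> id"
  shows "anonymity_group h n (\<lambda>p. if p \<in> A then id else \<sigma>) = anon_stabilizer h n A"
  using assms
  by (auto simp: anonymity_group_def symmetry_group_def anon_stabilizer_def sym_group_carrier
      permutes_id split: if_splits)

lemma subgroup_subset_anon_stabilizer_orbit: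
  assumes "subgroup U (sym_group h)" "p \<in> profiles h n"
  shows "U \<subseteq> anon_stabilizer h n (anon_orbit h U p)"
proof
  fix \<phi> assume "\<phi> \<in> U"
  note U = sym_group_subgroupD[OF assms(1)]
  have \<phi>: "\<phi> permutes {1..h}" "inv' \<phi> permutes {1..h}"
    using U(1)[OF \<open>\<phi> \<in> U\<close>] by (simp_all add: permutes_inv)
  have "prof_act h \<phi> id q \<in> anon_orbit h U p \<longleftrightarrow> q \<in> anon_orbit h U p"
    if "q \<in> profiles h n" for q
  proof
    assume "prof_act h \<phi> id q \<in> anon_orbit h U p"
    then obtain u where "u \<in> U" and u: "prof_act h \<phi> id q = prof_act h u id p"
      by (auto simp: anon_orbit_def)
    have "q = prof_act h (inv' \<phi> \<circ> \<phi>) id q"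
      using that \<phi>(1) by (simp add: permutes_inv_o(2) prof_act_id)
    also have "\<dots> = prof_act h (inv' \<phi>) id (prof_act h \<phi> id q)"
      using prof_act_comp[OF \<phi>(2,1), of id id] by simp
    also have "\<dots> = prof_act h (inv' \<phi> \<circ> u) id p"
      using u prof_act_comp[OF \<phi>(2) U(1)[OF \<open>u \<in> U\<close>], of id id] by simp
    finally show "q \<in> anon_orbit h U p"
      using U(3,4) \<open>\<phi> \<in> U\<close> \<open>u \<in> U\<close> by (auto simp: anon_orbit_def)
  next
    assume "q \<in> anon_orbit h U p"
    then obtain u where "u \<in> U" and "q = prof_act h u id p"
      by (auto simp: anon_orbit_def)
    then have "prof_act h \<phi> id q = prof_act h (\<phi> \<circ> u) id p"
      using prof_act_comp[OF \<phi>(1) U(1)[OF \<open>u \<in> U\<close>], of id id] by simp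
    then show "prof_act h \<phi> id q \<in> anon_orbit h U p"
      using U(3) \<open>\<phi> \<in> U\<close> \<open>u \<in> U\<close> by (auto simp: anon_orbit_def)
  qed
  then show "\<phi> \<in> anon_stabilizer h n (anon_orbit h U p)"
    using \<phi>(1) by (simp add: anon_stabilizer_def sym_group_carrier)
qed

lemma anon_stabilizer_orbit_subset_subgroup:
  assumes "subgroup U (sym_group h)" "p \<in> profiles h n" "inj_on p {1..h}"
  shows "anon_stabilizer h n (anon_orbit h U p) \<subseteq> U"
proof
  fix \<phi> assume \<phi>: "\<phi> \<in> anon_stabilizer h n (anon_orbit h U p)"
  note U = sym_group_subgroupD[OF assms(1)]
  have "p \<in> anon_orbit h U p"
    unfolding anon_orbit_def
    by (rule image_eqI[where x = id]) (simp_all add: prof_act_id[OF assms(2)] U(2))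
  then have "prof_act h \<phi> id p \<in> anon_orbit h U p"
    using \<phi> assms(2) by (simp add: anon_stabilizer_def)
  then obtain u where "u \<in> U" and eq: "prof_act h \<phi> id p = prof_act h u id p"
    by (auto simp: anon_orbit_def)
  moreover have "\<phi> permutes {1..h}"
    using \<phi> by (simp add: anon_stabilizer_def sym_group_carrier)
  ultimately have "\<phi> = u"
    using inj_onD[OF inj_on_prof_act_anon[OF assms(3)], of \<phi> u] U(1) by simp
  with \<open>u \<in> U\<close> show "\<phi> \<in> U"
    by simp
qed

lemma exists_injective_profile:
  assumes "h \<le> fact n"
  shows "\<exists>p\<in>profiles h n. inj_on p {1..h}"
proof -
  have "finite (carrier (sym_group n))"
    by (rule card_ge_0_finite) (simp add: sym_group_card_carrier)
  moreover have "card {1..h} \<le> card (carrier (sym_group n))"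
    using assms by (simp add: sym_group_card_carrier)
  ultimately obtain f where "f ` {1..h} \<subseteq> carrier (sym_group n)" "inj_on f {1..h}"
    using card_le_inj[OF finite_atLeastAtMost] by blast
  then have "restrict f {1..h} \<in> profiles h n" "inj_on (restrict f {1..h}) {1..h}"
    by (auto simp: profiles_def)
  then show ?thesis
    by blast
qed

theorem mainTheorem4:
  fixes h n :: nat and U :: "(nat \<Rightarrow> nat) set"
  assumes "h \<ge> 2" and "n \<ge> 2" and "h \<le> fact n"
    and "subgroup U (sym_group h)"
  shows "is_anonymity_group h n U"
proof -
  obtain p where p: "p \<in> profiles h n" "inj_on p {1..h}"
    using exists_injective_profile[OF assms(3)] by blast
  define \<sigma> :: "nat \<Rightarrow> nat" where "\<sigma> = Transposition.transpose 1 2"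
  have \<sigma>_carrier: "\<sigma> \<in> carrier (sym_group n)"
    using assms(2) by (simp add: \<sigma>_def sym_group_carrier permutes_swap_id)
  have \<sigma>_nontrivial: "\<sigma> \<noteq> id"
  proof
    assume "\<sigma> = id"
    then have "\<sigma> 1 = 1" by simp
    then show False by (simp add: \<sigma>_def)
  qed
  define F where "F = (\<lambda>q. if q \<in> anon_orbit h U p then id else \<sigma>)"
  have "F \<in> SPF h n"
    using \<sigma>_carrier by (simp add: F_def SPF_def sym_group_carrier permutes_id)
  moreover have "anonymity_group h n F = anon_stabilizer h n (anon_orbit h U p)"
    unfolding F_def by (rule anonymity_group_indicator[OF \<sigma>_carrier \<sigma>_nontrivial])
  moreover have "\<dots> = U"
    using anon_stabilizer_orbit_subset_subgroup[OF assms(4) p]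
      subgroup_subset_anon_stabilizer_orbit[OF assms(4) p(1)] by (rule subset_antisym)
  ultimately show ?thesis
    unfolding is_anonymity_group_def by blast
qed

end
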